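(* Let $\mathcal{G}$ be a connected simple undirected graph on $N$ nodes, $G=(D+I_N)^{-1}(A+I_N)$, $T>0$ and $g<0$. Let $\Gamma=e^{gT}I_N-(e^{gT}-1)G$. Then every eigenvalue $\mu$ of $\Gamma$ is real and satisfies $-1<\mu\le 1$, $\mu=1$ is an eigenvalue of algebraic multiplicity one, and $\Gamma\mathbf{1}_N=\mathbf{1}_N$. Moreover, every solution of $\dot x(t)=gx(t)-gGx(kT)$ for $t\in[kT,(k+1)T)$, $k=0,1,2,\dots$ (with $x$ continuous) satisfies $x((k+1)T)=\Gamma x(kT)$ for all $k\ge 0$.
   Context: $A$ is the adjacency matrix and $D$ the degree matrix of the graph; $\mathbf{1}_N$ is the all-ones vector. *)

theory Defs
  imports Complex_Main "Jordan_Normal_Form.Char_Poly" "Jordan_Normal_Form.Gauss_Jordan_Elimination"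
begin

text \<open>A simple undirected graph on the vertex set {0..<N} is given by a symmetric,
irreflexive adjacency relation E (only its restriction to {0..<N} matters).\<close>

definition simple_graph :: "nat \<Rightarrow> (nat \<Rightarrow> nat \<Rightarrow> bool) \<Rightarrow> bool" where
  "simple_graph N E \<longleftrightarrow> (\<forall>i<N. \<forall>j<N. E i j \<longleftrightarrow> E j i) \<and> (\<forall>i<N. \<not> E i i)"

definition graph_connected :: "nat \<Rightarrow> (nat \<Rightarrow> nat \<Rightarrow> bool) \<Rightarrow> bool" where
  "graph_connected N E \<longleftrightarrow> N > 0 \<and>
     (\<forall>i<N. \<forall>j<N. (\<lambda>u v. u < N \<and> v < N \<and> E u v)\<^sup>*\<^sup>* i j)"

definition adj_mat :: "nat \<Rightarrow> (nat \<Rightarrow> nat \<Rightarrow> bool) \<Rightarrow> real mat" where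
  "adj_mat N E = mat N N (\<lambda>(i, j). if E i j then 1 else 0)"

definition degree :: "nat \<Rightarrow> (nat \<Rightarrow> nat \<Rightarrow> bool) \<Rightarrow> nat \<Rightarrow> nat" where
  "degree N E i = card {j. j < N \<and> E i j}"

definition deg_mat :: "nat \<Rightarrow> (nat \<Rightarrow> nat \<Rightarrow> bool) \<Rightarrow> real mat" where
  "deg_mat N E = mat N N (\<lambda>(i, j). if i = j then real (degree N E i) else 0)"

text \<open>G = (D + I)^{-1} (A + I); D + I is invertible (positive diagonal).\<close>
definition G_mat :: "nat \<Rightarrow> (nat \<Rightarrow> nat \<Rightarrow> bool) \<Rightarrow> real mat" where
  "G_mat N E = the (mat_inverse (deg_mat N E + 1\<^sub>m N)) * (adj_mat N E + 1\<^sub>m N)"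

definition Gamma_mat :: "nat \<Rightarrow> (nat \<Rightarrow> nat \<Rightarrow> bool) \<Rightarrow> real \<Rightarrow> real \<Rightarrow> real mat" where
  "Gamma_mat N E g T = exp (g * T) \<cdot>\<^sub>m 1\<^sub>m N - (exp (g * T) - 1) \<cdot>\<^sub>m G_mat N E"

definition ones_vec :: "nat \<Rightarrow> real vec" where
  "ones_vec N = vec N (\<lambda>_. 1)"

end

theory Submission
  imports Defs "Jordan_Normal_Form.Jordan_Normal_Form_Uniqueness" "Jordan_Normal_Form.Jordan_Normal_Form_Existence"
begin

(* Write d_i for the degree of node i.  G = (D + I)^-1 (A + I) is self-adjoint for the inner
   product with weights d_i + 1, hence so is Gamma = e^(gT) I + (1 - e^(gT)) G, and its
   eigenvalues are real.  For a real eigenvector u of G the Rayleigh quotient is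
   (|u|^2 + u.Au) / (|u|^2 + u.Du), and the Laplacian and signless Laplacian forms
   u.(D -+ A)u = 1/2 sum_ij a_ij (u_i -+ u_j)^2 >= 0 place it in (-1, 1]; hence the
   eigenvalues of Gamma lie in (2 e^(gT) - 1, 1].  Since G 1 = 1 and Gamma - I is a nonzero
   multiple of G - I, the kernel of (Gamma - I)^2 consists of the vectors u with G u = u + c 1
   for some c; summing the rows gives c = 0, and a G-harmonic vector is constant on a
   connected graph.  So the Jordan form of Gamma has a single block of size 1 for the
   eigenvalue 1.  Finally, on [kT, (k+1)T) every coordinate solves a scalar linear ODE with
   the constant input (G x(kT))_i, whose explicit solution is x((k+1)T) = Gamma x(kT). *)

hide_const (open) Coset.order

section \<open>Linear algebra\<close>

lemma mult_mat_vec_index_sum: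
  assumes "A \<in> carrier_mat n m" and "v \<in> carrier_vec m" and "i < n"
  shows "(A *\<^sub>v v) $ i = (\<Sum>j<m. A $$ (i, j) * v $ j)"
  using assms by (simp add: scalar_prod_def lessThan_atLeast0)

lemma Re_of_real_mult_mat_vec:
  fixes A :: "real mat"
  assumes "A \<in> carrier_mat n m" and "v \<in> carrier_vec m"
  shows "map_vec Re (map_mat of_real A *\<^sub>v v) = A *\<^sub>v map_vec Re v"
  using assms by (intro eq_vecI) (auto simp: scalar_prod_def Re_sum)

lemma Im_of_real_mult_mat_vec:
  fixes A :: "real mat"
  assumes "A \<in> carrier_mat n m" and "v \<in> carrier_vec m"
  shows "map_vec Im (map_mat of_real A *\<^sub>v v) = A *\<^sub>v map_vec Im v"
  using assms by (intro eq_vecI) (auto simp: scalar_prod_def Im_sum)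

lemma of_real_eigenvectorE:
  fixes A :: "real mat"
  assumes A: "A \<in> carrier_mat n n" and ev: "eigenvector (map_mat of_real A) v \<mu>"
  obtains x y where "x \<in> carrier_vec n" and "y \<in> carrier_vec n" and "x \<noteq> 0\<^sub>v n \<or> y \<noteq> 0\<^sub>v n"
    and "A *\<^sub>v x = Re \<mu> \<cdot>\<^sub>v x - Im \<mu> \<cdot>\<^sub>v y" and "A *\<^sub>v y = Re \<mu> \<cdot>\<^sub>v y + Im \<mu> \<cdot>\<^sub>v x"
proof
  have v: "v \<in> carrier_vec n" "v \<noteq> 0\<^sub>v n" "map_mat of_real A *\<^sub>v v = \<mu> \<cdot>\<^sub>v v"
    using ev A unfolding eigenvector_def by auto
  show "map_vec Re v \<in> carrier_vec n" "map_vec Im v \<in> carrier_vec n"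
    using v(1) by auto
  show "map_vec Re v \<noteq> 0\<^sub>v n \<or> map_vec Im v \<noteq> 0\<^sub>v n"
    using v(1,2) by (auto simp: vec_eq_iff complex_eq_iff)
  show "A *\<^sub>v map_vec Re v = Re \<mu> \<cdot>\<^sub>v map_vec Re v - Im \<mu> \<cdot>\<^sub>v map_vec Im v"
    using arg_cong[OF v(3), of "map_vec Re"] v(1)
    by (auto simp: Re_of_real_mult_mat_vec[OF A v(1), symmetric] intro!: eq_vecI)
  show "A *\<^sub>v map_vec Im v = Re \<mu> \<cdot>\<^sub>v map_vec Im v + Im \<mu> \<cdot>\<^sub>v map_vec Re v"
    using arg_cong[OF v(3), of "map_vec Im"] v(1)
    by (auto simp: Im_of_real_mult_mat_vec[OF A v(1), symmetric] intro!: eq_vecI)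
qed

lemma weighted_sum_squares_pos:
  fixes u :: "real vec"
  assumes "u \<in> carrier_vec n" and "u \<noteq> 0\<^sub>v n" and "\<And>i. i < n \<Longrightarrow> 0 < w i"
  shows "0 < (\<Sum>i<n. w i * (u $ i)\<^sup>2)"
proof -
  obtain i where "i < n" "u $ i \<noteq> 0"
    using assms(1,2) by (auto simp: vec_eq_iff)
  with assms(3) show ?thesis
    by (intro sum_pos2[of _ i]) (auto intro!: mult_nonneg_nonneg simp: less_imp_le)
qed

lemma self_adjoint_eigenvalue_real:
  fixes A :: "real mat" and w :: "nat \<Rightarrow> real" and \<mu> :: complex
  assumes A: "A \<in> carrier_mat n n" and w: "\<And>i. i < n \<Longrightarrow> 0 < w i"
    and self_adjoint: "\<And>x y. x \<in> carrier_vec n \<Longrightarrow> y \<in> carrier_vec n \<Longrightarrow>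
      (\<Sum>i<n. w i * x $ i * (A *\<^sub>v y) $ i) = (\<Sum>i<n. w i * y $ i * (A *\<^sub>v x) $ i)"
    and ev: "eigenvalue (map_mat of_real A) \<mu>"
  shows "\<mu> \<in> \<real>"
proof -
  from ev obtain v where "eigenvector (map_mat of_real A) v \<mu>"
    unfolding eigenvalue_def by blast
  then obtain x y where x: "x \<in> carrier_vec n" and y: "y \<in> carrier_vec n"
    and nz: "x \<noteq> 0\<^sub>v n \<or> y \<noteq> 0\<^sub>v n"
    and Ax: "A *\<^sub>v x = Re \<mu> \<cdot>\<^sub>v x - Im \<mu> \<cdot>\<^sub>v y" and Ay: "A *\<^sub>v y = Re \<mu> \<cdot>\<^sub>v y + Im \<mu> \<cdot>\<^sub>v x"
    by (rule of_real_eigenvectorE[OF A])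
  define inner :: "real vec \<Rightarrow> real vec \<Rightarrow> real" where
    "inner a b = (\<Sum>i<n. w i * a $ i * b $ i)" for a b
  have "(\<Sum>i<n. w i * y $ i * (A *\<^sub>v x) $ i) = Re \<mu> * inner y x - Im \<mu> * inner y y"
    using x y by (simp add: Ax inner_def sum_subtractf sum_distrib_left algebra_simps)
  moreover have "(\<Sum>i<n. w i * x $ i * (A *\<^sub>v y) $ i) = Re \<mu> * inner x y + Im \<mu> * inner x x"
    using x y by (simp add: Ay inner_def sum.distrib sum_distrib_left algebra_simps)
  moreover have "inner x y = inner y x"
    unfolding inner_def by (simp add: algebra_simps)
  ultimately have "Im \<mu> * (inner x x + inner y y) = 0"
    using self_adjoint[OF x y] by (simp add: algebra_simps)
  moreover have "0 < inner x x + inner y y"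
  proof -
    have pos: "0 < inner u u" if "u \<in> carrier_vec n" "u \<noteq> 0\<^sub>v n" for u
    proof -
      have "0 < (\<Sum>i<n. w i * (u $ i)\<^sup>2)"
        by (rule weighted_sum_squares_pos[OF that w])
      then show ?thesis
        unfolding inner_def by (simp add: power2_eq_square mult.assoc)
    qed
    have nonneg: "0 \<le> inner u u" for u
      unfolding inner_def using w
      by (auto simp: mult.assoc less_imp_le intro!: sum_nonneg mult_nonneg_nonneg[OF _ zero_le_square])
    show ?thesis
      using pos[OF x] pos[OF y] nonneg[of x] nonneg[of y] nz by (meson add_nonneg_pos add_pos_nonneg)
  qed
  ultimately show ?thesis
    by (simp add: complex_is_Real_iff)
qed

lemma of_real_eigenvalue_Re:
  fixes A :: "real mat" and \<mu> :: complex
  assumes A: "A \<in> carrier_mat n n" and ev: "eigenvalue (map_mat of_real A) \<mu>" and "\<mu> \<in> \<real>"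
  shows "eigenvalue A (Re \<mu>)"
proof -
  have "Im \<mu> = 0"
    using \<open>\<mu> \<in> \<real>\<close> by (simp add: complex_is_Real_iff)
  from ev obtain v where "eigenvector (map_mat of_real A) v \<mu>"
    unfolding eigenvalue_def by blast
  then obtain x y where x: "x \<in> carrier_vec n" and y: "y \<in> carrier_vec n"
    and nz: "x \<noteq> 0\<^sub>v n \<or> y \<noteq> 0\<^sub>v n"
    and "A *\<^sub>v x = Re \<mu> \<cdot>\<^sub>v x - Im \<mu> \<cdot>\<^sub>v y" "A *\<^sub>v y = Re \<mu> \<cdot>\<^sub>v y + Im \<mu> \<cdot>\<^sub>v x"
    by (rule of_real_eigenvectorE[OF A])
  with \<open>Im \<mu> = 0\<close> A have "A *\<^sub>v x = Re \<mu> \<cdot>\<^sub>v x" "A *\<^sub>v y = Re \<mu> \<cdot>\<^sub>v y"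
    by (auto simp: vec_eq_iff)
  with x y nz A show ?thesis
    unfolding eigenvalue_def eigenvector_def by auto
qed

lemma mat_inverse_eqI:
  fixes A B :: "'a :: field mat"
  assumes A: "A \<in> carrier_mat n n" and B: "B \<in> carrier_mat n n"
    and BA: "B * A = 1\<^sub>m n" and AB: "A * B = 1\<^sub>m n"
  shows "mat_inverse A = Some B"
proof (cases "mat_inverse A")
  case None
  have "A \<in> Units (ring_mat TYPE('a) n ())"
    using A B BA AB unfolding Units_def ring_mat_def by auto
  with mat_inverse(1)[OF A None, of "()"] show ?thesis by contradiction
next
  case (Some B')
  with mat_inverse(2)[OF A] have AB': "A * B' = 1\<^sub>m n" and B': "B' \<in> carrier_mat n n"
    by auto
  have "B' = (B * A) * B'"
    using B' by (simp add: BA)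
  also have "\<dots> = B * (A * B')"
    by (rule assoc_mult_mat[OF B A B'])
  also have "\<dots> = B"
    using B by (simp add: AB')
  finally show ?thesis
    using Some by simp
qed

lemma kernel_dim_le_1:
  fixes K :: "'a :: field mat"
  assumes K: "K \<in> carrier_mat n n" and v: "v \<in> mat_kernel K"
    and multiple: "\<And>w. w \<in> mat_kernel K \<Longrightarrow> \<exists>c. w = c \<cdot>\<^sub>v v"
  shows "kernel_dim K \<le> 1"
proof -
  interpret kernel n n K
    by unfold_locales (rule K)
  have "Ker.span {v} = mat_kernel K"
  proof
    show "Ker.span {v} \<subseteq> mat_kernel K"
      using v by (intro Ker.span_is_subset2) auto
    show "mat_kernel K \<subseteq> Ker.span {v}"
    proof
      fix w assume "w \<in> mat_kernel K"
      then obtain c where "w = c \<cdot>\<^sub>v v"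
        using multiple by blast
      moreover have "submodule class_ring (Ker.span {v}) VK"
        using v by (intro Ker.span_is_submodule) auto
      moreover have "v \<in> Ker.span {v}"
        using v Ker.in_own_span[of "{v}"] by auto
      ultimately show "w \<in> Ker.span {v}"
        using submodule.smult_closed[of class_ring _ VK c v] by simp
    qed
  qed
  then have "dim \<le> 1"
    using v by (intro Ker.dim_le1I) auto
  then show ?thesis
    by simp
qed

lemma order_char_poly_eq_1:
  fixes A :: "complex mat"
  assumes A: "A \<in> carrier_mat n n" and ev: "eigenvalue A e"
    and dim: "dim_gen_eigenspace A e 2 \<le> 1"
  shows "order e (char_poly A) = 1"
proof -
  obtain as where "char_poly A = (\<Prod>a\<leftarrow>as. [:- a, 1:])"
    using char_poly_factorized[OF A] by blast
  from jordan_nf_exists[OF A this] obtain n_as where jnf: "jordan_nf A n_as"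
    by blast
  define sizes where "sizes = map fst (filter (\<lambda>na. snd na = e) n_as)"
  have order: "order e (char_poly A) = sum_list sizes"
    unfolding sizes_def by (rule jordan_nf_order[OF jnf])
  have filter_eq: "(\<lambda>(n, e'). e' = e) = (\<lambda>na. snd na = e)"
    by auto
  have "sum_list (map (min 2) sizes) \<le> 1"
    using dim dim_gen_eigenspace[OF jnf, of e 2, unfolded filter_eq] unfolding sizes_def by simp
  \<comment> \<open>each Jordan block of size \<open>k\<close> for \<open>e\<close> contributes \<open>min 2 k\<close> to \<open>dim ker (A - e I)\<^sup>2\<close>\<close>
  then have "\<forall>k \<in> set sizes. k \<le> 1"
    using member_le_sum_list[of "min 2 _" "map (min 2) sizes"] by fastforce
  then have "map (min 2) sizes = sizes"
    by (intro map_idI) auto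
  then have "order e (char_poly A) \<le> 1"
    using order \<open>sum_list (map (min 2) sizes) \<le> 1\<close> by simp
  moreover have "order e (char_poly A) \<noteq> 0"
  proof -
    have "poly (char_poly A) e = 0"
      using ev eigenvalue_root_char_poly[OF A] by simp
    moreover have "char_poly A \<noteq> 0"
      using degree_monic_char_poly[OF A] by auto
    ultimately show ?thesis
      by (simp add: order_root)
  qed
  ultimately show ?thesis
    by simp
qed

section \<open>Quadratic forms of a symmetric adjacency relation\<close>

definition nbr_sum :: "nat \<Rightarrow> (nat \<Rightarrow> nat \<Rightarrow> bool) \<Rightarrow> (nat \<Rightarrow> real) \<Rightarrow> nat \<Rightarrow> real" where
  "nbr_sum N E u i = (\<Sum>j<N. of_bool (E i j) * u j)"

lemma degree_eq_sum: "real (degree N E i) = (\<Sum>j<N. of_bool (E i j))"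
proof -
  have "{..<N} \<inter> {j. E i j} = {j. j < N \<and> E i j}"
    by auto
  then show ?thesis
    unfolding degree_def by (simp add: sum_of_bool_eq)
qed

locale symmetric_adjacency =
  fixes N :: nat and E :: "nat \<Rightarrow> nat \<Rightarrow> bool"
  assumes sym: "\<And>i j. i < N \<Longrightarrow> j < N \<Longrightarrow> E i j = E j i"
begin

(* keep the of_bool weights inside the double sums, so that sum.swap and symmetry apply *)
declare sum_of_bool_eq [simp del] sum_of_bool_mult_eq [simp del] sum_mult_of_bool_eq [simp del]

lemma sum_swap_edges:
  "(\<Sum>i<N. \<Sum>j<N. of_bool (E i j) * f i j) = (\<Sum>i<N. \<Sum>j<N. of_bool (E i j) * f j i)"
  by (subst sum.swap) (intro sum.cong refl, simp add: sym)

lemma sum_mult_nbr_sum_commute: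
  "(\<Sum>i<N. x i * nbr_sum N E y i) = (\<Sum>i<N. y i * nbr_sum N E x i)"
  using sum_swap_edges[of "\<lambda>i j. x i * y j"]
  unfolding nbr_sum_def by (simp add: sum_distrib_left algebra_simps)

lemma sum_nbr_sum: "(\<Sum>i<N. nbr_sum N E u i) = (\<Sum>i<N. real (degree N E i) * u i)"
  using sum_swap_edges[of "\<lambda>i j. u j"]
  unfolding nbr_sum_def by (simp add: degree_eq_sum sum_distrib_right)

lemma laplacian_quadratic_form:
  "(\<Sum>i<N. \<Sum>j<N. of_bool (E i j) * (u i - u j)\<^sup>2)
     = 2 * ((\<Sum>i<N. real (degree N E i) * (u i)\<^sup>2) - (\<Sum>i<N. u i * nbr_sum N E u i))"
  using sum_swap_edges[of "\<lambda>i j. (u i)\<^sup>2"]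
  unfolding nbr_sum_def power2_diff
  by (simp add: degree_eq_sum sum.distrib sum_subtractf sum_distrib_left sum_distrib_right algebra_simps)

lemma signless_laplacian_quadratic_form:
  "(\<Sum>i<N. \<Sum>j<N. of_bool (E i j) * (u i + u j)\<^sup>2)
     = 2 * ((\<Sum>i<N. real (degree N E i) * (u i)\<^sup>2) + (\<Sum>i<N. u i * nbr_sum N E u i))"
  using sum_swap_edges[of "\<lambda>i j. (u i)\<^sup>2"]
  unfolding nbr_sum_def power2_sum
  by (simp add: degree_eq_sum sum.distrib sum_distrib_left sum_distrib_right algebra_simps)

lemma abs_sum_mult_nbr_sum_le:
  "\<bar>\<Sum>i<N. u i * nbr_sum N E u i\<bar> \<le> (\<Sum>i<N. real (degree N E i) * (u i)\<^sup>2)"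
proof -
  have "0 \<le> (\<Sum>i<N. \<Sum>j<N. of_bool (E i j) * (u i - u j)\<^sup>2)"
    and "0 \<le> (\<Sum>i<N. \<Sum>j<N. of_bool (E i j) * (u i + u j)\<^sup>2)"
    by (intro sum_nonneg mult_nonneg_nonneg; simp)+
  then show ?thesis
    unfolding laplacian_quadratic_form signless_laplacian_quadratic_form abs_le_iff by auto
qed

lemma harmonic_imp_constant:
  assumes connected: "graph_connected N E"
    and harmonic: "\<And>i. i < N \<Longrightarrow> nbr_sum N E u i = real (degree N E i) * u i"
    and "i < N"
  shows "u i = u 0"
proof -
  have "(\<Sum>i<N. \<Sum>j<N. of_bool (E i j) * (u i - u j)\<^sup>2) = 0"
    unfolding laplacian_quadratic_form using harmonic by (simp add: power2_eq_square algebra_simps)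
  then have edge: "u a = u b" if "a < N" "b < N" "E a b" for a b
    using that by (subst (asm) sum_nonneg_eq_0_iff; simp add: sum_nonneg)+
  have reach: "u a = u b" if "(\<lambda>a b. a < N \<and> b < N \<and> E a b)\<^sup>*\<^sup>* a b" for a b
    using that by (induction rule: rtranclp_induct) (auto dest: edge)
  have "(\<lambda>a b. a < N \<and> b < N \<and> E a b)\<^sup>*\<^sup>* 0 i"
    using connected \<open>i < N\<close> unfolding graph_connected_def by blast
  then show ?thesis
    using reach by simp
qed

end

section \<open>The matrices \<open>G\<close> and \<open>\<Gamma>\<close>\<close>

lemma deg_mat_plus_one: "deg_mat N E + 1\<^sub>m N = mat_diag N (\<lambda>i. real (degree N E i) + 1)"
  by (intro eq_matI) (auto simp: deg_mat_def mat_diag_def)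

lemma inverse_deg_mat_plus_one:
  "the (mat_inverse (deg_mat N E + 1\<^sub>m N)) = mat_diag N (\<lambda>i. 1 / (real (degree N E i) + 1))"
proof -
  have "(\<lambda>i. 1 / (real (degree N E i) + 1) * (real (degree N E i) + 1)) = (\<lambda>_. 1)"
    and "(\<lambda>i. (real (degree N E i) + 1) * (1 / (real (degree N E i) + 1))) = (\<lambda>_. 1)"
    by (auto simp: field_simps)
  then show ?thesis
    unfolding deg_mat_plus_one by (subst mat_inverse_eqI[of _ N]) auto
qed

lemma G_mat_eq:
  "G_mat N E = mat N N (\<lambda>(i, j). (of_bool (E i j) + of_bool (i = j)) / (real (degree N E i) + 1))"
  unfolding G_mat_def inverse_deg_mat_plus_one
  by (subst mat_diag_mult_left[of _ N N]) (auto simp: adj_mat_def intro!: eq_matI)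

lemma G_mat_carrier: "G_mat N E \<in> carrier_mat N N"
  by (simp add: G_mat_eq)

lemma G_mat_dim [simp]: "dim_row (G_mat N E) = N" "dim_col (G_mat N E) = N"
  using G_mat_carrier by auto

lemma G_mult_vec_index:
  assumes v: "v \<in> carrier_vec N" and i: "i < N"
  shows "(real (degree N E i) + 1) * (G_mat N E *\<^sub>v v) $ i = v $ i + nbr_sum N E (($) v) i"
proof -
  have "(G_mat N E *\<^sub>v v) $ i = (\<Sum>j<N. G_mat N E $$ (i, j) * v $ j)"
    by (rule mult_mat_vec_index_sum[OF G_mat_carrier v i])
  also have "\<dots> = (\<Sum>j<N. of_bool (E i j) * v $ j + of_bool (i = j) * v $ j) / (real (degree N E i) + 1)"
    using i unfolding sum_divide_distrib by (intro sum.cong) (auto simp: G_mat_eq field_simps)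
  also have "\<dots> = (v $ i + nbr_sum N E (($) v) i) / (real (degree N E i) + 1)"
    using i by (simp add: nbr_sum_def sum.distrib)
  finally show ?thesis
    by (simp add: field_simps)
qed

lemma ones_vec_carrier [simp]: "ones_vec N \<in> carrier_vec N"
  and ones_vec_dim [simp]: "dim_vec (ones_vec N) = N"
  and ones_vec_index [simp]: "i < N \<Longrightarrow> ones_vec N $ i = 1"
  by (simp_all add: ones_vec_def)

lemma nbr_sum_ones: "nbr_sum N E (($) (ones_vec N)) i = real (degree N E i)"
  unfolding nbr_sum_def degree_eq_sum ones_vec_def by (intro sum.cong) auto

lemma G_mult_ones: "G_mat N E *\<^sub>v ones_vec N = ones_vec N"
proof (rule eq_vecI)
  fix i assume "i < dim_vec (ones_vec N)"
  then have "i < N" by simp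
  then have "(real (degree N E i) + 1) * (G_mat N E *\<^sub>v ones_vec N) $ i = (real (degree N E i) + 1) * 1"
    using G_mult_vec_index[OF ones_vec_carrier] by (simp add: nbr_sum_ones del: index_mult_mat_vec)
  then show "(G_mat N E *\<^sub>v ones_vec N) $ i = ones_vec N $ i"
    using \<open>i < N\<close> by (simp del: index_mult_mat_vec)
qed simp

lemma Gamma_mat_carrier: "Gamma_mat N E g T \<in> carrier_mat N N"
  using G_mat_carrier[of N E] unfolding Gamma_mat_def carrier_mat_def by simp

lemma Gamma_mult_vec:
  assumes v: "v \<in> carrier_vec N"
  shows "Gamma_mat N E g T *\<^sub>v v = exp (g * T) \<cdot>\<^sub>v v + (1 - exp (g * T)) \<cdot>\<^sub>v (G_mat N E *\<^sub>v v)"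
proof (rule eq_vecI)
  fix i assume "i < dim_vec (exp (g * T) \<cdot>\<^sub>v v + (1 - exp (g * T)) \<cdot>\<^sub>v (G_mat N E *\<^sub>v v))"
  then have i: "i < N"
    using v G_mat_carrier[of N E] by simp
  have "(Gamma_mat N E g T *\<^sub>v v) $ i = (\<Sum>j<N. Gamma_mat N E g T $$ (i, j) * v $ j)"
    by (rule mult_mat_vec_index_sum[OF Gamma_mat_carrier v i])
  also have "\<dots> = (\<Sum>j<N. exp (g * T) * (of_bool (i = j) * v $ j) - (exp (g * T) - 1) * (G_mat N E $$ (i, j) * v $ j))"
    using i G_mat_carrier[of N E] by (intro sum.cong) (auto simp: Gamma_mat_def algebra_simps)
  also have "\<dots> = exp (g * T) * v $ i - (exp (g * T) - 1) * (G_mat N E *\<^sub>v v) $ i"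
    using i by (simp add: sum_subtractf sum_distrib_left[symmetric] mult_mat_vec_index_sum[OF G_mat_carrier v i])
  finally show "(Gamma_mat N E g T *\<^sub>v v) $ i = (exp (g * T) \<cdot>\<^sub>v v + (1 - exp (g * T)) \<cdot>\<^sub>v (G_mat N E *\<^sub>v v)) $ i"
    using i v G_mat_carrier[of N E] by (simp add: algebra_simps)
qed (use v Gamma_mat_carrier[of N E g T] in simp)

lemma Gamma_mult_ones: "Gamma_mat N E g T *\<^sub>v ones_vec N = ones_vec N"
  by (simp add: Gamma_mult_vec ones_vec_def G_mult_ones[unfolded ones_vec_def] vec_eq_iff algebra_simps)

lemma Gamma_eigenvalue_one:
  assumes "0 < N"
  shows "eigenvalue (Gamma_mat N E g T) 1"
proof -
  have "ones_vec N \<noteq> 0\<^sub>v N"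
    using assms by (auto simp: vec_eq_iff)
  then show ?thesis
    unfolding eigenvalue_def eigenvector_def using Gamma_mult_ones Gamma_mat_carrier[of N E g T]
    by (intro exI[of _ "ones_vec N"]) auto
qed

lemma char_matrix_Gamma_mult_vec:
  assumes "v \<in> carrier_vec N"
  shows "char_matrix (Gamma_mat N E g T) 1 *\<^sub>v v = (1 - exp (g * T)) \<cdot>\<^sub>v (G_mat N E *\<^sub>v v - v)"
  using assms Gamma_mat_carrier[of N E g T] G_mat_carrier[of N E]
  by (simp add: char_matrix_def add_mult_distrib_mat_vec[of _ N N] Gamma_mult_vec vec_eq_iff algebra_simps)

context symmetric_adjacency
begin

lemma G_self_adjoint:
  assumes x: "x \<in> carrier_vec N" and y: "y \<in> carrier_vec N"
  shows "(\<Sum>i<N. (real (degree N E i) + 1) * x $ i * (G_mat N E *\<^sub>v y) $ i)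
       = (\<Sum>i<N. (real (degree N E i) + 1) * y $ i * (G_mat N E *\<^sub>v x) $ i)"
proof -
  have "(\<Sum>i<N. (real (degree N E i) + 1) * u $ i * (G_mat N E *\<^sub>v v) $ i)
      = (\<Sum>i<N. u $ i * v $ i) + (\<Sum>i<N. u $ i * nbr_sum N E (($) v) i)"
    if "u \<in> carrier_vec N" "v \<in> carrier_vec N" for u v
    using that by (simp add: G_mult_vec_index mult.assoc mult.left_commute[of _ "u $ _"] sum.distrib
        distrib_left del: index_mult_mat_vec)
  then show ?thesis
    using x y sum_mult_nbr_sum_commute[where x = "($) x" and y = "($) y"] by (simp add: mult.commute)
qed

lemma G_eigenvalue_bounds:
  assumes u: "u \<in> carrier_vec N" "u \<noteq> 0\<^sub>v N" and eig: "G_mat N E *\<^sub>v u = l \<cdot>\<^sub>v u"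
  shows "-1 < l \<and> l \<le> 1"
proof -
  define P where "P = (\<Sum>i<N. (u $ i)\<^sup>2)"
  define D where "D = (\<Sum>i<N. real (degree N E i) * (u $ i)\<^sup>2)"
  define Q where "Q = (\<Sum>i<N. u $ i * nbr_sum N E (($) u) i)"
  have "u $ i + nbr_sum N E (($) u) i = l * (real (degree N E i) + 1) * u $ i" if "i < N" for i
    using G_mult_vec_index[OF u(1) that, of E] that u(1)
    by (simp add: eig algebra_simps del: index_mult_mat_vec)
  then have "(\<Sum>i<N. u $ i * (u $ i + nbr_sum N E (($) u) i))
      = (\<Sum>i<N. l * ((real (degree N E i) + 1) * (u $ i)\<^sup>2))"
    by (intro sum.cong) (simp_all add: power2_eq_square algebra_simps)
  then have rayleigh: "P + Q = l * (D + P)"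
    unfolding P_def D_def Q_def
    by (simp add: sum.distrib sum_distrib_left power2_eq_square algebra_simps)
  have "0 < P"
    unfolding P_def using weighted_sum_squares_pos[OF u, of "\<lambda>_. 1"] by simp
  moreover have "\<bar>Q\<bar> \<le> D"
    unfolding Q_def D_def by (rule abs_sum_mult_nbr_sum_le)
  ultimately have "l * (D + P) \<le> 1 * (D + P)" and "-1 * (D + P) < l * (D + P)"
    using rayleigh by auto
  moreover have "0 < D + P"
    using \<open>0 < P\<close> \<open>\<bar>Q\<bar> \<le> D\<close> by linarith
  ultimately show ?thesis
    using mult_right_le_imp_le mult_right_less_imp_less by (metis less_imp_le)
qed

lemma G_mult_vec_eq_add_const_imp_constant:
  assumes connected: "graph_connected N E" and v: "v \<in> carrier_vec N"
    and eq: "G_mat N E *\<^sub>v v = v + c \<cdot>\<^sub>v ones_vec N"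
  shows "v = v $ 0 \<cdot>\<^sub>v ones_vec N"
proof -
  have nbr: "nbr_sum N E (($) v) i = real (degree N E i) * v $ i + c * (real (degree N E i) + 1)"
    if "i < N" for i
    using G_mult_vec_index[OF v that, of E] that v
    by (simp add: eq algebra_simps del: index_mult_mat_vec)
  \<comment> \<open>summed over \<open>i\<close>, the neighbour sums cancel the degree terms\<close>
  then have "(\<Sum>i<N. nbr_sum N E (($) v) i)
      = (\<Sum>i<N. real (degree N E i) * v $ i) + (\<Sum>i<N. c * (real (degree N E i) + 1))"
    by (simp add: sum.distrib)
  also have "(\<Sum>i<N. c * (real (degree N E i) + 1)) = c * (\<Sum>i<N. real (degree N E i) + 1)"
    by (rule sum_distrib_left[symmetric])
  finally have "(\<Sum>i<N. nbr_sum N E (($) v) i)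
      = (\<Sum>i<N. real (degree N E i) * v $ i) + c * (\<Sum>i<N. real (degree N E i) + 1)" .
  then have "c * (\<Sum>i<N. real (degree N E i) + 1) = 0"
    using sum_nbr_sum[where u = "($) v"] by simp
  moreover have "0 < (\<Sum>i<N. real (degree N E i) + 1)"
    using connected unfolding graph_connected_def by (intro sum_pos) auto
  ultimately have "c = 0"
    by simp
  then have const: "v $ i = v $ 0" if "i < N" for i
    using harmonic_imp_constant[OF connected _ that, where u = "($) v"] nbr by simp
  show ?thesis
  proof (rule eq_vecI)
    fix i assume "i < dim_vec (v $ 0 \<cdot>\<^sub>v ones_vec N)"
    then show "v $ i = (v $ 0 \<cdot>\<^sub>v ones_vec N) $ i"
      using const[of i] by simp
  qed (use v in simp)
qed

end

locale sampled_consensus = symmetric_adjacency +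
  fixes g T :: real
  assumes decay: "g * T < 0"
begin

lemma exp_decay_bounds: "0 < exp (g * T)" "exp (g * T) < 1"
  using decay by simp_all

lemma Gamma_eigenvalue_bounds:
  assumes "eigenvalue (Gamma_mat N E g T) \<mu>"
  shows "-1 < \<mu> \<and> \<mu> \<le> 1"
proof -
  let ?a = "exp (g * T)"
  obtain u where u: "u \<in> carrier_vec N" "u \<noteq> 0\<^sub>v N" and eig: "Gamma_mat N E g T *\<^sub>v u = \<mu> \<cdot>\<^sub>v u"
    using assms Gamma_mat_carrier[of N E g T] unfolding eigenvalue_def eigenvector_def by auto
  define l where "l = (\<mu> - ?a) / (1 - ?a)"
  have ne: "1 - ?a \<noteq> 0"
    using exp_decay_bounds(2) by linarith
  have "(G_mat N E *\<^sub>v u) $ i = l * u $ i" if "i < N" for i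
  proof -
    have "?a * u $ i + (1 - ?a) * (G_mat N E *\<^sub>v u) $ i = \<mu> * u $ i"
      using arg_cong[OF eig, of "\<lambda>w. w $ i"] that u(1)
      by (simp add: Gamma_mult_vec[OF u(1)] del: index_mult_mat_vec)
    with ne show ?thesis
      unfolding l_def by (simp add: field_simps)
  qed
  then have "G_mat N E *\<^sub>v u = l \<cdot>\<^sub>v u"
    using u(1) by (intro eq_vecI) (auto simp del: index_mult_mat_vec)
  then have "-1 < l \<and> l \<le> 1"
    by (rule G_eigenvalue_bounds[OF u])
  moreover have "0 < 1 - ?a"
    using exp_decay_bounds(2) by linarith
  ultimately have "(1 - ?a) * -1 < (1 - ?a) * l" and "(1 - ?a) * l \<le> (1 - ?a) * 1"
    by (simp_all only: mult_strict_left_mono mult_left_mono less_imp_le)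
  then have "?a - 1 < (1 - ?a) * l" and "(1 - ?a) * l \<le> 1 - ?a"
    by simp_all
  moreover have "\<mu> = ?a + (1 - ?a) * l"
    using ne by (simp add: l_def)
  ultimately show ?thesis
    using exp_decay_bounds(1) by linarith
qed

lemma Gamma_self_adjoint:
  assumes x: "x \<in> carrier_vec N" and y: "y \<in> carrier_vec N"
  shows "(\<Sum>i<N. (real (degree N E i) + 1) * x $ i * (Gamma_mat N E g T *\<^sub>v y) $ i)
       = (\<Sum>i<N. (real (degree N E i) + 1) * y $ i * (Gamma_mat N E g T *\<^sub>v x) $ i)"
proof -
  have "(\<Sum>i<N. (real (degree N E i) + 1) * u $ i * (Gamma_mat N E g T *\<^sub>v v) $ i)
      = exp (g * T) * (\<Sum>i<N. (real (degree N E i) + 1) * u $ i * v $ i)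
        + (1 - exp (g * T)) * (\<Sum>i<N. (real (degree N E i) + 1) * u $ i * (G_mat N E *\<^sub>v v) $ i)"
    if "u \<in> carrier_vec N" "v \<in> carrier_vec N" for u v
  proof -
    have "(\<Sum>i<N. (real (degree N E i) + 1) * u $ i * (Gamma_mat N E g T *\<^sub>v v) $ i)
        = (\<Sum>i<N. exp (g * T) * ((real (degree N E i) + 1) * u $ i * v $ i)
            + (1 - exp (g * T)) * ((real (degree N E i) + 1) * u $ i * (G_mat N E *\<^sub>v v) $ i))"
      using that by (intro sum.cong) (simp_all add: Gamma_mult_vec algebra_simps del: index_mult_mat_vec)
    then show ?thesis
      by (simp add: sum.distrib sum_distrib_left)
  qed
  then show ?thesis
    using G_self_adjoint[OF x y] x y by (simp add: mult.commute mult.left_commute)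
qed

lemma Gamma_complex_eigenvalue:
  assumes ev: "eigenvalue (map_mat complex_of_real (Gamma_mat N E g T)) \<mu>"
  shows "\<mu> \<in> \<real> \<and> -1 < Re \<mu> \<and> Re \<mu> \<le> 1"
proof -
  have "\<mu> \<in> \<real>"
    by (rule self_adjoint_eigenvalue_real[where w = "\<lambda>i. real (degree N E i) + 1",
          OF Gamma_mat_carrier _ Gamma_self_adjoint ev]) simp_all
  moreover have "eigenvalue (Gamma_mat N E g T) (Re \<mu>)"
    by (rule of_real_eigenvalue_Re[OF Gamma_mat_carrier ev \<open>\<mu> \<in> \<real>\<close>])
  ultimately show ?thesis
    using Gamma_eigenvalue_bounds by blast
qed

lemma Gamma_generalized_kernel:
  assumes connected: "graph_connected N E" and u: "u \<in> carrier_vec N"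
    and ker: "char_matrix (Gamma_mat N E g T) 1 ^\<^sub>m 2 *\<^sub>v u = 0\<^sub>v N"
  shows "u = u $ 0 \<cdot>\<^sub>v ones_vec N"
proof -
  let ?B = "char_matrix (Gamma_mat N E g T) 1"
  let ?a = "exp (g * T)"
  have B: "?B \<in> carrier_mat N N"
    using Gamma_mat_carrier by simp
  have ne: "1 - ?a \<noteq> 0"
    using exp_decay_bounds(2) by linarith
  define z where "z = G_mat N E *\<^sub>v u - u"
  have z: "z \<in> carrier_vec N"
    unfolding z_def using G_mat_carrier[of N E] u by simp
  have "?B *\<^sub>v (?B *\<^sub>v u) = 0\<^sub>v N"
    using ker B u by (simp add: numeral_2_eq_2 assoc_mult_mat_vec[of _ N N _ N])
  moreover have "?B *\<^sub>v (?B *\<^sub>v u) = (1 - ?a) \<cdot>\<^sub>v ((1 - ?a) \<cdot>\<^sub>v (G_mat N E *\<^sub>v z - z))"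
    using char_matrix_Gamma_mult_vec[OF u] char_matrix_Gamma_mult_vec[OF z] mult_mat_vec[OF B z]
    unfolding z_def by simp
  ultimately have "G_mat N E *\<^sub>v z = z + 0 \<cdot>\<^sub>v ones_vec N"
    using ne z by (auto simp: vec_eq_iff simp del: index_mult_mat_vec)
  then have z_const: "z = z $ 0 \<cdot>\<^sub>v ones_vec N"
    by (rule G_mult_vec_eq_add_const_imp_constant[OF connected z])
  have "(G_mat N E *\<^sub>v u) $ i = u $ i + z $ 0" if "i < N" for i
  proof -
    have "z $ i = z $ 0"
      using arg_cong[OF z_const, of "\<lambda>v. v $ i"] that by simp
    then show ?thesis
      using that u G_mat_carrier[of N E] unfolding z_def by (simp del: index_mult_mat_vec)
  qed
  then have "G_mat N E *\<^sub>v u = u + z $ 0 \<cdot>\<^sub>v ones_vec N"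
    using u by (intro eq_vecI) (simp_all del: index_mult_mat_vec)
  then show ?thesis
    by (rule G_mult_vec_eq_add_const_imp_constant[OF connected u])
qed

lemma dim_gen_eigenspace_Gamma_one:
  assumes connected: "graph_connected N E"
  shows "dim_gen_eigenspace (map_mat complex_of_real (Gamma_mat N E g T)) 1 2 \<le> 1"
proof -
  let ?B = "char_matrix (Gamma_mat N E g T) 1"
  let ?K = "?B ^\<^sub>m 2"
  let ?one = "map_vec complex_of_real (ones_vec N)"
  have "0 < N"
    using connected unfolding graph_connected_def by simp
  have B: "?B \<in> carrier_mat N N" and K: "?K \<in> carrier_mat N N"
    using Gamma_mat_carrier by simp_all
  have "char_matrix (map_mat complex_of_real (Gamma_mat N E g T)) 1 = map_mat complex_of_real ?B"
    using Gamma_mat_carrier[of N E g T] by (intro eq_matI) (auto simp: char_matrix_def)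
  then have K_eq:
    "char_matrix (map_mat complex_of_real (Gamma_mat N E g T)) 1 ^\<^sub>m 2 = map_mat complex_of_real ?K"
    by (simp add: of_real_hom.mat_hom_pow[OF B])
  have "?B *\<^sub>v ones_vec N = 0\<^sub>v N"
    by (simp add: char_matrix_Gamma_mult_vec G_mult_ones vec_eq_iff)
  then have "?K *\<^sub>v ones_vec N = ?B *\<^sub>v 0\<^sub>v N"
    using B by (simp add: numeral_2_eq_2 assoc_mult_mat_vec[of _ N N _ N])
  also have "\<dots> = 0\<^sub>v N"
    using B by (simp add: vec_eq_iff)
  finally have "?K *\<^sub>v ones_vec N = 0\<^sub>v N" .
  show ?thesis
    unfolding dim_gen_eigenspace_def K_eq
  proof (rule kernel_dim_le_1[of _ N ?one])
    show "map_mat complex_of_real ?K \<in> carrier_mat N N"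
      using K by simp
    show "?one \<in> mat_kernel (map_mat complex_of_real ?K)"
      using K \<open>?K *\<^sub>v ones_vec N = 0\<^sub>v N\<close>
      by (intro mat_kernelI) (auto simp: of_real_hom.mult_mat_vec_hom[OF K, symmetric])
  next
    fix w assume "w \<in> mat_kernel (map_mat complex_of_real ?K)"
    then have w: "w \<in> carrier_vec N" and "map_mat complex_of_real ?K *\<^sub>v w = 0\<^sub>v N"
      using mat_kernelD[of "map_mat complex_of_real ?K" N N w] K by auto
    moreover have "map_vec Re (0\<^sub>v N) = 0\<^sub>v N" and "map_vec Im (0\<^sub>v N) = 0\<^sub>v N"
      by (auto simp: vec_eq_iff)
    ultimately have "?K *\<^sub>v map_vec Re w = 0\<^sub>v N" and "?K *\<^sub>v map_vec Im w = 0\<^sub>v N"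
      using Re_of_real_mult_mat_vec[OF K w] Im_of_real_mult_mat_vec[OF K w] by metis+
    then have re: "map_vec Re w = Re (w $ 0) \<cdot>\<^sub>v ones_vec N"
      and im: "map_vec Im w = Im (w $ 0) \<cdot>\<^sub>v ones_vec N"
      using Gamma_generalized_kernel[OF connected, of "map_vec Re w"]
        Gamma_generalized_kernel[OF connected, of "map_vec Im w"] w \<open>0 < N\<close> by auto
    have const: "w $ i = w $ 0" if "i < N" for i
      using arg_cong[OF re, of "\<lambda>v. v $ i"] arg_cong[OF im, of "\<lambda>v. v $ i"]
        that carrier_vecD[OF w] \<open>0 < N\<close>
      by (simp add: complex_eq_iff)
    have "w = w $ 0 \<cdot>\<^sub>v ?one"
    proof (rule eq_vecI)
      fix i assume "i < dim_vec (w $ 0 \<cdot>\<^sub>v ?one)"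
      then show "w $ i = (w $ 0 \<cdot>\<^sub>v ?one) $ i"
        using const[of i] by simp
    qed (use w in simp)
    then show "\<exists>c. w = c \<cdot>\<^sub>v ?one" ..
  qed
qed

lemma order_Gamma_one:
  assumes connected: "graph_connected N E"
  shows "order 1 (char_poly (Gamma_mat N E g T)) = 1"
proof -
  interpret of_real_poly: map_poly_inj_idom_divide_hom "of_real :: real \<Rightarrow> complex"
    by unfold_locales simp
  have "0 < N"
    using connected unfolding graph_connected_def by simp
  then have "eigenvalue (map_mat complex_of_real (Gamma_mat N E g T)) 1"
    using of_real_hom.eigenvalue_hom[OF Gamma_mat_carrier Gamma_eigenvalue_one] by simp
  then have "order 1 (char_poly (map_mat complex_of_real (Gamma_mat N E g T))) = 1"
    using Gamma_mat_carrier dim_gen_eigenspace_Gamma_one[OF connected]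
    by (intro order_char_poly_eq_1[of _ N]) simp_all
  then show ?thesis
    using of_real_poly.order_hom[of 1 "char_poly (Gamma_mat N E g T)"]
    by (simp add: of_real_hom.char_poly_hom[OF Gamma_mat_carrier])
qed

end

section \<open>The sampled-data dynamics\<close>

lemma linear_ode_constant_input:
  fixes f :: "real \<Rightarrow> real"
  assumes "a < b" and cont: "continuous_on {a..b} f"
    and deriv: "\<And>t. a < t \<Longrightarrow> t < b \<Longrightarrow> (f has_real_derivative g * (f t - c)) (at t)"
  shows "f b = exp (g * (b - a)) * f a + (1 - exp (g * (b - a))) * c"
proof -
  define h where "h t = (f t - c) * exp (- (g * (t - a)))" for t
  have "continuous_on {a..b} h"
    unfolding h_def by (intro continuous_intros cont)
  moreover have "(h has_real_derivative 0) (at t)" if "a < t" "t < b" for t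
  proof -
    have "((\<lambda>s. f s - c) has_real_derivative g * (f t - c)) (at t)"
      using DERIV_diff[OF deriv[OF that] DERIV_const] by simp
    moreover have
      "((\<lambda>s. exp (- (g * (s - a)))) has_real_derivative exp (- (g * (t - a))) * (- g)) (at t)"
      by (auto intro!: derivative_eq_intros)
    ultimately have "(h has_real_derivative
        g * (f t - c) * exp (- (g * (t - a))) + exp (- (g * (t - a))) * (- g) * (f t - c)) (at t)"
      unfolding h_def by (rule DERIV_mult)
    then show ?thesis
      by (simp add: algebra_simps)
  qed
  ultimately have "h b = h a"
    by (rule DERIV_isconst_end[OF \<open>a < b\<close>])
  then have "(f b - c) * exp (- (g * (b - a))) = f a - c"
    unfolding h_def by simp
  then have "f b - c = (f a - c) * exp (g * (b - a))"
    by (metis exp_minus_inverse mult.commute mult.left_commute mult_1_right)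
  then show ?thesis
    by (simp add: algebra_simps)
qed

lemma sampled_solution_step:
  fixes x :: "real \<Rightarrow> nat \<Rightarrow> real"
  assumes "0 < T"
    and cont: "\<And>i. i < N \<Longrightarrow> continuous_on {t0..t0 + T} (\<lambda>t. x t i)"
    and deriv: "\<And>t i. t \<in> {t0..<t0 + T} \<Longrightarrow> i < N \<Longrightarrow>
      ((\<lambda>s. x s i) has_real_derivative g * x t i - g * (G_mat N E *\<^sub>v vec N (x t0)) $ i)
        (at t within {t0..<t0 + T})"
  shows "vec N (x (t0 + T)) = Gamma_mat N E g T *\<^sub>v vec N (x t0)"
proof (rule eq_vecI)
  fix i assume "i < dim_vec (Gamma_mat N E g T *\<^sub>v vec N (x t0))"
  then have i: "i < N"
    using Gamma_mat_carrier[of N E g T] by simp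
  let ?c = "(G_mat N E *\<^sub>v vec N (x t0)) $ i"
  have "x (t0 + T) i = exp (g * T) * x t0 i + (1 - exp (g * T)) * ?c"
  proof (rule linear_ode_constant_input[where f = "\<lambda>t. x t i" and a = t0 and b = "t0 + T", simplified])
    show "0 < T" "continuous_on {t0..t0 + T} (\<lambda>t. x t i)"
      using \<open>0 < T\<close> cont[OF i] by simp_all
  next
    fix t assume t: "t0 < t" "t < t0 + T"
    have "at t within {t0..<t0 + T} = at t"
      using t by (intro at_within_open_subset[of _ "{t0<..<t0 + T}"]) auto
    with deriv[of t i] t i show "((\<lambda>s. x s i) has_real_derivative g * (x t i - ?c)) (at t)"
      by (simp add: algebra_simps)
  qed
  then show "vec N (x (t0 + T)) $ i = (Gamma_mat N E g T *\<^sub>v vec N (x t0)) $ i"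
    using i by (simp add: Gamma_mult_vec del: index_mult_mat_vec)
qed (use Gamma_mat_carrier[of N E g T] in simp)

theorem mainTheorem7:
  fixes N :: nat and E :: "nat \<Rightarrow> nat \<Rightarrow> bool" and g T :: real
  assumes "simple_graph N E" and "graph_connected N E" and "T > 0" and "g < 0"
  shows "(\<forall>\<mu>. eigenvalue (map_mat complex_of_real (Gamma_mat N E g T)) \<mu> \<longrightarrow>
            \<mu> \<in> \<real> \<and> -1 < Re \<mu> \<and> Re \<mu> \<le> 1)
       \<and> eigenvalue (Gamma_mat N E g T) 1
       \<and> order 1 (char_poly (Gamma_mat N E g T)) = 1
       \<and> Gamma_mat N E g T *\<^sub>v ones_vec N = ones_vec N
       \<and> (\<forall>x :: real \<Rightarrow> nat \<Rightarrow> real.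
            ((\<forall>i<N. continuous_on {0..} (\<lambda>t. x t i)) \<and>
             (\<forall>k::nat. \<forall>t \<in> {real k * T ..< real (Suc k) * T}. \<forall>i<N.
                ((\<lambda>s. x s i) has_real_derivative
                   (g * x t i - g * (G_mat N E *\<^sub>v vec N (x (real k * T))) $ i))
                 (at t within {real k * T ..< real (Suc k) * T})))
            \<longrightarrow> (\<forall>k::nat. vec N (x (real (Suc k) * T))
                   = Gamma_mat N E g T *\<^sub>v vec N (x (real k * T))))"
proof -
  interpret sampled_consensus N E g T
    using assms(1,3,4) by unfold_locales (auto simp: simple_graph_def mult_neg_pos)
  have "0 < N"
    using assms(2) unfolding graph_connected_def by simp
  have sampling: "vec N (x (real (Suc k) * T)) = Gamma_mat N E g T *\<^sub>v vec N (x (real k * T))"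
    if cont: "\<forall>i<N. continuous_on {0..} (\<lambda>t. x t i)"
      and deriv: "\<forall>k::nat. \<forall>t \<in> {real k * T ..< real (Suc k) * T}. \<forall>i<N.
        ((\<lambda>s. x s i) has_real_derivative (g * x t i - g * (G_mat N E *\<^sub>v vec N (x (real k * T))) $ i))
          (at t within {real k * T ..< real (Suc k) * T})"
    for x :: "real \<Rightarrow> nat \<Rightarrow> real" and k :: nat
  proof -
    have "{real k * T..real k * T + T} \<subseteq> {0..}"
      using \<open>T > 0\<close> by auto
    then have "vec N (x (real k * T + T)) = Gamma_mat N E g T *\<^sub>v vec N (x (real k * T))"
      using \<open>T > 0\<close> continuous_on_subset[OF cont[rule_format]] spec[OF deriv, of k]
      by (intro sampled_solution_step) (auto simp: algebra_simps)
    then show ?thesis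
      by (simp add: algebra_simps)
  qed
  show ?thesis
    using Gamma_complex_eigenvalue Gamma_eigenvalue_one[OF \<open>0 < N\<close>] order_Gamma_one[OF assms(2)]
      Gamma_mult_ones sampling by (simp add: algebra_simps)
qed

end
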